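(* For all $0<d<2$ and $0\le t\le1$, the operator $\mathrm{LL}^{\otimes}_{d,t}$ maps $\mathcal W_2(\mathbb{R}^2)$ into itself and is a contraction on the metric space $(\mathcal W_2(\mathbb{R}^2),W_2)$. That is, there is $c<1$ such that $$W_2\big(\mathrm{LL}^{\otimes}_{d,t}(\rho),\mathrm{LL}^{\otimes}_{d,t}(\nu)\big)\le c\,W_2(\rho,\nu)\quad\text{for all }\rho,\nu\in\mathcal W_2(\mathbb{R}^2).$$
   Context: $\mathcal W_2(\mathbb{R}^2)$ is the set of probability measures $\rho$ on $\mathbb{R}^2$ with $\int\|x\|_2^2\,\mathrm{d}\rho<\infty$. $W_2(\rho,\nu)=\inf\mathbb{E}[\|X-X'\|_2^2]^{1/2}$, where the infimum is over couplings with $X\sim\rho$ and $X'\sim\nu$. For a probability measure $\rho$ on $\mathbb{R}^2$, $\mathrm{LL}^{\otimes}_{d,t}(\rho)$ is the law of $$\Big(\sum_{i\le D}s_i\log\tfrac{1+r_i\tanh(\xi_{i,1}/2)}2+\sum_{i\le D'}s'_i\log\tfrac{1+r'_i\tanh(\xi'_{i,1}/2)}2,\ \ \sum_{i\le D}s_i\log\tfrac{1+r_i\tanh(\xi_{i,2}/2)}2+\sum_{i\le D''}s''_i\log\tfrac{1+r''_i\tanh(\xi''_{i,2}/2)}2\Big),$$ where $\xi_i=(\xi_{i,1},\xi_{i,2})$, $\xi'_i$, $\xi''_i$ ($i\ge1$) have law $\rho$, $D\sim\mathrm{Po}(td)$, $D',D''\sim\mathrm{Po}((1-t)d)$, and $s_i,s'_i,s''_i,r_i,r'_i,r''_i$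 are uniform on $\{\pm1\}$, all mutually independent. *)

theory Defs
  imports "HOL-Probability.Probability"
begin

type_synonym pt = "real \<times> real"

definition Po :: "real \<Rightarrow> nat pmf" where
  "Po lam = (if lam = 0 then return_pmf 0 else poisson_pmf lam)"

definition unif_sign :: "real measure" where
  "unif_sign = measure_pmf (pmf_of_set {-1, 1})"

definition LLterm :: "real \<Rightarrow> real \<Rightarrow> real \<Rightarrow> real" where
  "LLterm s r x = s * ln ((1 + r * tanh (x / 2)) / 2)"

definition term_law :: "(real \<Rightarrow> real \<Rightarrow> pt \<Rightarrow> pt) \<Rightarrow> pt measure \<Rightarrow> pt measure" where
  "term_law g rho = distr (rho \<Otimes>\<^sub>M (unif_sign \<Otimes>\<^sub>M unif_sign)) borel
      (\<lambda>(x, (s, r)). g s r x)"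

definition both_coords :: "real \<Rightarrow> real \<Rightarrow> pt \<Rightarrow> pt" where
  "both_coords s r x = (LLterm s r (fst x), LLterm s r (snd x))"

definition first_coord :: "real \<Rightarrow> real \<Rightarrow> pt \<Rightarrow> pt" where
  "first_coord s r x = (LLterm s r (fst x), 0)"

definition second_coord :: "real \<Rightarrow> real \<Rightarrow> pt \<Rightarrow> pt" where
  "second_coord s r x = (0, LLterm s r (snd x))"

definition compound_Po :: "real \<Rightarrow> pt measure \<Rightarrow> pt measure" where
  "compound_Po lam mu = measure_pmf (Po lam) \<bind>
      (\<lambda>n. distr (PiM {..<n} (\<lambda>_. mu)) borel (\<lambda>y. \<Sum>i<n. y i))"

definition LL :: "real \<Rightarrow> real \<Rightarrow> pt measure \<Rightarrow> pt measure" where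
  "LL d t rho = distr
      (compound_Po (t * d) (term_law both_coords rho) \<Otimes>\<^sub>M
       (compound_Po ((1 - t) * d) (term_law first_coord rho) \<Otimes>\<^sub>M
        compound_Po ((1 - t) * d) (term_law second_coord rho)))
      borel (\<lambda>(a, (b, c)). a + b + c)"

definition W2space :: "pt measure set" where
  "W2space = {rho. sets rho = sets borel \<and> prob_space rho \<and>
      (\<integral>\<^sup>+ x. ennreal ((norm x)\<^sup>2) \<partial>rho) < \<infinity>}"

definition couplings :: "pt measure \<Rightarrow> pt measure \<Rightarrow> (pt \<times> pt) measure set" where
  "couplings rho nu = {C. sets C = sets borel \<and> prob_space C \<and>
      distr C borel fst = rho \<and> distr C borel snd = nu}"

definition W2sq :: "pt measure \<Rightarrow> pt measure \<Rightarrow> ennreal" where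
  "W2sq rho nu = (INF C \<in> couplings rho nu. \<integral>\<^sup>+ p. ennreal ((dist (fst p) (snd p))\<^sup>2) \<partial>C)"

definition W2 :: "pt measure \<Rightarrow> pt measure \<Rightarrow> real" where
  "W2 rho nu = sqrt (enn2real (W2sq rho nu))"

end

theory Submission
  imports Defs
begin

(* Couple rho and nu by some C and run the construction of LL on both coordinates of C at once,
   with shared Poisson counts and shared signs: this is a coupling of LL rho and LL nu.
   For r = 1 and r = -1 the summands are s (a - softplus a) and - s softplus a; as softplus is
   increasing and 1-Lipschitz, averaging the squared increment of a summand over the signs gives
   at most half the squared increment of a. The summands are symmetric, so the second moment of
   a compound Poisson sum is its rate times that of one summand, and second moments of
   independent sums add. Every coordinate receives summands at total rate t d + (1 - t) d = d,
   so the transport cost shrinks by the factor d / 2 and W2 by sqrt (d / 2) < 1. The same moment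
   identity, with E |summand|^2 <= a^2 + 2, shows that LL preserves finite second moments. *)

lemma sets_unif_sign [simp, measurable_cong]: "sets unif_sign = sets (count_space UNIV)"
  by (simp add: unif_sign_def)

lemma prob_space_unif_sign: "prob_space unif_sign"
  by (simp add: unif_sign_def measure_pmf.prob_space_axioms)

lemma nn_integral_unif_sign: "(\<integral>\<^sup>+s. f s \<partial>unif_sign) = (f (-1) + f 1) / 2"
proof -
  have "(\<integral>\<^sup>+s. f s \<partial>unif_sign) = (\<Sum>s\<in>{-1, 1::real}. f s * ennreal (pmf (pmf_of_set {-1, 1}) s))"
    unfolding unif_sign_def by (subst nn_integral_measure_pmf_finite) auto
  then show ?thesis
    by (simp add: ennreal_divide_times divide_ennreal_def ring_distribs)
qed

definition sign_mean :: "(real \<Rightarrow> real \<Rightarrow> 'a::{numeral, inverse}) \<Rightarrow> 'a" where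
  "sign_mean F = (F (-1) (-1) + F (-1) 1 + F 1 (-1) + F 1 1) / 4"

lemma sign_mean_flip:
  fixes F :: "real \<Rightarrow> real \<Rightarrow> 'a::{ab_semigroup_add, numeral, inverse}"
  shows "sign_mean (\<lambda>s r. F (-s) r) = sign_mean F"
  by (simp add: sign_mean_def ac_simps)

lemma sign_mean_add:
  fixes F G :: "real \<Rightarrow> real \<Rightarrow> real"
  shows "sign_mean (\<lambda>s r. F s r + G s r) = sign_mean F + sign_mean G"
  by (simp add: sign_mean_def add_divide_distrib[symmetric] ac_simps)

lemma ennreal_sign_mean:
  assumes "\<And>s r. 0 \<le> F s r"
  shows "ennreal (sign_mean F) = sign_mean (\<lambda>s r. ennreal (F s r))"
  using assms by (simp add: sign_mean_def ennreal_plus divide_ennreal[symmetric] add_nonneg_nonneg)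

lemma nn_integral_unif_sign_pair:
  assumes "f \<in> borel_measurable (unif_sign \<Otimes>\<^sub>M unif_sign)"
  shows "(\<integral>\<^sup>+p. f p \<partial>(unif_sign \<Otimes>\<^sub>M unif_sign)) = sign_mean (\<lambda>s r. f (s, r))"
proof -
  interpret prob_space unif_sign by (rule prob_space_unif_sign)
  have quarter: "inverse (2::ennreal) * inverse 2 = inverse 4"
    by (subst ennreal_inverse_mult[symmetric]) auto
  have "(\<integral>\<^sup>+p. f p \<partial>(unif_sign \<Otimes>\<^sub>M unif_sign)) = (\<integral>\<^sup>+s. \<integral>\<^sup>+r. f (s, r) \<partial>unif_sign \<partial>unif_sign)"
    by (rule nn_integral_fst[symmetric, OF assms])
  also have "\<dots> = sign_mean (\<lambda>s r. f (s, r))"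
    by (simp add: nn_integral_unif_sign sign_mean_def divide_ennreal_def distrib_right
        mult.assoc quarter add.assoc)
  finally show ?thesis .
qed

lemma borel_measurable_pair_unif_sign:
  fixes F :: "'a::second_countable_topology \<times> real \<times> real \<Rightarrow> 'b::topological_space"
  assumes "sets M = sets borel" and "F \<in> borel_measurable borel"
  shows "F \<in> borel_measurable (M \<Otimes>\<^sub>M (unif_sign \<Otimes>\<^sub>M unif_sign))"
proof -
  have "(\<lambda>p::'a \<times> real \<times> real. (fst p, fst (snd p), snd (snd p)))
      \<in> borel \<Otimes>\<^sub>M (count_space UNIV \<Otimes>\<^sub>M count_space UNIV) \<rightarrow>\<^sub>M borel \<Otimes>\<^sub>M (borel \<Otimes>\<^sub>M borel)"
    by (intro measurable_Pair measurable_compose[OF measurable_snd] measurable_fst)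
      (auto intro: measurable_compose[OF measurable_fst])
  from measurable_compose[OF this]
  have "F \<in> borel_measurable (borel \<Otimes>\<^sub>M (count_space UNIV \<Otimes>\<^sub>M count_space UNIV))"
    using assms(2) by (simp add: borel_prod)
  moreover have "sets (M \<Otimes>\<^sub>M (unif_sign \<Otimes>\<^sub>M unif_sign))
      = sets (borel \<Otimes>\<^sub>M (count_space UNIV \<Otimes>\<^sub>M count_space UNIV))"
    using assms(1) by (intro sets_pair_measure_cong) simp_all
  ultimately show ?thesis
    using measurable_cong_sets by blast
qed

definition sign_law :: "(real \<Rightarrow> real \<Rightarrow> 'a \<Rightarrow> 'b::topological_space) \<Rightarrow> 'a measure \<Rightarrow> 'b measure" where
  "sign_law g M = distr (M \<Otimes>\<^sub>M (unif_sign \<Otimes>\<^sub>M unif_sign)) borel (\<lambda>(x, s, r). g s r x)"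

lemma sets_sign_law [simp, measurable_cong]: "sets (sign_law g M) = sets borel"
  by (simp add: sign_law_def)

lemma prob_space_sign_law:
  fixes g :: "real \<Rightarrow> real \<Rightarrow> 'a::second_countable_topology \<Rightarrow> 'b::topological_space"
  assumes "prob_space M" and "sets M = sets borel" and "(\<lambda>(x, s, r). g s r x) \<in> borel_measurable borel"
  shows "prob_space (sign_law g M)"
  unfolding sign_law_def
  by (intro prob_space.prob_space_distr prob_space_pair assms prob_space_unif_sign
      borel_measurable_pair_unif_sign)

lemma nn_integral_sign_law:
  fixes g :: "real \<Rightarrow> real \<Rightarrow> 'a::second_countable_topology \<Rightarrow> 'b::topological_space"
  assumes M: "sets M = sets borel" and g: "(\<lambda>(x, s, r). g s r x) \<in> borel_measurable borel"
    and f: "f \<in> borel_measurable borel"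
  shows "(\<integral>\<^sup>+y. f y \<partial>sign_law g M) = (\<integral>\<^sup>+x. sign_mean (\<lambda>s r. f (g s r x)) \<partial>M)"
proof -
  interpret signs: prob_space "unif_sign \<Otimes>\<^sub>M unif_sign"
    by (intro prob_space_pair prob_space_unif_sign)
  have fg: "(\<lambda>(x, s, r). f (g s r x)) \<in> borel_measurable (M \<Otimes>\<^sub>M (unif_sign \<Otimes>\<^sub>M unif_sign))"
    using measurable_compose[OF g f]
    by (intro borel_measurable_pair_unif_sign[OF M]) (simp add: comp_def split_beta')
  have "(\<integral>\<^sup>+y. f y \<partial>sign_law g M)
      = (\<integral>\<^sup>+p. f (case p of (x, s, r) \<Rightarrow> g s r x) \<partial>(M \<Otimes>\<^sub>M (unif_sign \<Otimes>\<^sub>M unif_sign)))"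
    unfolding sign_law_def
    by (rule nn_integral_distr) (use borel_measurable_pair_unif_sign[OF M g] f in simp_all)
  also have "\<dots> = (\<integral>\<^sup>+x. \<integral>\<^sup>+p. f (g (fst p) (snd p) x) \<partial>(unif_sign \<Otimes>\<^sub>M unif_sign) \<partial>M)"
    using signs.nn_integral_fst[OF fg] by (simp add: split_beta')
  also have "\<dots> = (\<integral>\<^sup>+x. sign_mean (\<lambda>s r. f (g s r x)) \<partial>M)"
    using measurable_Pair2[OF fg]
    by (intro nn_integral_cong) (simp add: nn_integral_unif_sign_pair split_beta')
  finally show ?thesis .
qed

lemma borel_measurable_sign_mean [measurable]:
  assumes "\<And>s r. (\<lambda>x. F s r x) \<in> borel_measurable M"
  shows "(\<lambda>x. sign_mean (\<lambda>s r. F s r x) :: ennreal) \<in> borel_measurable M"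
  using assms unfolding sign_mean_def divide_ennreal_def by measurable

lemma borel_measurable_term:
  fixes g :: "real \<Rightarrow> real \<Rightarrow> 'a::second_countable_topology \<Rightarrow> 'b::topological_space"
  assumes "(\<lambda>(x, s, r). g s r x) \<in> borel_measurable borel"
  shows "g s r \<in> borel_measurable borel"
proof -
  have "(\<lambda>(x, s, r). g s r x) \<in> borel_measurable (borel \<Otimes>\<^sub>M borel)"
    using assms by (simp add: borel_prod)
  from measurable_Pair1[OF this, of "(s, r)"] show ?thesis
    by simp
qed

lemma emeasure_distr_nn_integral:
  assumes "T \<in> measurable M N" and "A \<in> sets N"
  shows "emeasure (distr M N T) A = (\<integral>\<^sup>+x. indicator A (T x) \<partial>M)"
  using assms by (simp add: nn_integral_distr[symmetric])

lemma distr_sign_law: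
  fixes g :: "real \<Rightarrow> real \<Rightarrow> 'a::second_countable_topology \<Rightarrow> 'b::topological_space"
    and h :: "real \<Rightarrow> real \<Rightarrow> 'c::second_countable_topology \<Rightarrow> 'd::topological_space"
  assumes M: "sets M = sets borel"
    and g: "(\<lambda>(x, s, r). g s r x) \<in> borel_measurable borel"
    and h: "(\<lambda>(x, s, r). h s r x) \<in> borel_measurable borel"
    and L: "L \<in> borel_measurable borel" and P: "P \<in> borel_measurable borel"
    and commute: "\<And>s r x. L (g s r x) = h s r (P x)"
  shows "distr (sign_law g M) borel L = sign_law h (distr M borel P)"
proof (rule measure_eqI)
  fix A assume "A \<in> sets (distr (sign_law g M) borel L)"
  then have A [measurable]: "A \<in> sets borel" by simp
  note [measurable] = L P borel_measurable_term[OF g] borel_measurable_term[OF h]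
  have "emeasure (distr (sign_law g M) borel L) A = (\<integral>\<^sup>+y. indicator A (L y) \<partial>sign_law g M)"
    by (simp add: emeasure_distr_nn_integral)
  also have "\<dots> = (\<integral>\<^sup>+x. sign_mean (\<lambda>s r. indicator A (h s r (P x))) \<partial>M)"
    by (subst nn_integral_sign_law[OF M g]) (simp_all add: commute)
  also have "\<dots> = (\<integral>\<^sup>+z. sign_mean (\<lambda>s r. indicator A (h s r z)) \<partial>distr M borel P)"
    using M by (subst nn_integral_distr) simp_all
  also have "\<dots> = emeasure (sign_law h (distr M borel P)) A"
    by (subst nn_integral_sign_law[OF _ h, symmetric]) simp_all
  finally show "emeasure (distr (sign_law g M) borel L) A = emeasure (sign_law h (distr M borel P)) A" .
qed simp

lemma distr_sign_law_uminus:
  fixes g :: "real \<Rightarrow> real \<Rightarrow> 'a::second_countable_topology \<Rightarrow>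
    'b::{second_countable_topology, real_normed_vector}"
  assumes M: "sets M = sets borel"
    and g: "(\<lambda>(x, s, r). g s r x) \<in> borel_measurable borel"
    and odd: "\<And>s r x. g (-s) r x = - g s r x"
  shows "distr (sign_law g M) borel uminus = sign_law g M"
proof (rule measure_eqI)
  fix A assume "A \<in> sets (distr (sign_law g M) borel uminus)"
  then have A [measurable]: "A \<in> sets borel" by simp
  note [measurable] = borel_measurable_term[OF g]
  have "emeasure (distr (sign_law g M) borel uminus) A = (\<integral>\<^sup>+y. indicator A (- y) \<partial>sign_law g M)"
    by (simp add: emeasure_distr_nn_integral)
  also have "\<dots> = (\<integral>\<^sup>+x. sign_mean (\<lambda>s r. indicator A (g (-s) r x)) \<partial>M)"
    by (subst nn_integral_sign_law[OF M g]) (simp_all add: odd)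
  also have "\<dots> = (\<integral>\<^sup>+x. sign_mean (\<lambda>s r. indicator A (g s r x)) \<partial>M)"
    by (intro nn_integral_cong sign_mean_flip[where F = "\<lambda>s r. indicator A (g s r x)" for x])
  also have "\<dots> = emeasure (sign_law g M) A"
    by (subst nn_integral_sign_law[OF M g, symmetric]) simp_all
  finally show "emeasure (distr (sign_law g M) borel uminus) A = emeasure (sign_law g M) A" .
qed simp

section \<open>Compound Poisson sums\<close>

lemma borel_measurable_linear:
  fixes L :: "'a::euclidean_space \<Rightarrow> 'b::real_normed_vector"
  assumes "linear L"
  shows "L \<in> borel_measurable borel"
  using assms by (intro borel_measurable_continuous_onI linear_continuous_on)
    (simp add: linear_conv_bounded_linear)

definition iid_sum_law :: "'a::euclidean_space measure \<Rightarrow> nat \<Rightarrow> 'a measure" where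
  "iid_sum_law \<mu> n = distr (PiM {..<n} (\<lambda>_. \<mu>)) borel (\<lambda>y. \<Sum>i<n. y i)"

definition compound_poisson :: "real \<Rightarrow> 'a::euclidean_space measure \<Rightarrow> 'a measure" where
  "compound_poisson lam \<mu> = measure_pmf (Po lam) \<bind> iid_sum_law \<mu>"

lemma compound_Po_eq_compound_poisson: "compound_Po = compound_poisson"
  by (simp add: fun_eq_iff compound_Po_def compound_poisson_def iid_sum_law_def[abs_def])

lemma sets_iid_sum_law [simp, measurable_cong]: "sets (iid_sum_law \<mu> n) = sets borel"
  by (simp add: iid_sum_law_def)

lemma borel_measurable_PiM_sum:
  fixes \<mu> :: "'a::euclidean_space measure"
  assumes "sets \<mu> = sets borel"
  shows "(\<lambda>y. \<Sum>i<n. y i) \<in> borel_measurable (PiM {..<n} (\<lambda>_. \<mu>))"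
proof -
  have "sets (PiM {..<n} (\<lambda>_. \<mu>)) = sets (PiM {..<n} (\<lambda>_. borel :: 'a measure))"
    using assms by (intro sets_PiM_cong) simp_all
  moreover have "(\<lambda>y. \<Sum>i<n. y i) \<in> borel_measurable (PiM {..<n} (\<lambda>_. borel :: 'a measure))"
    by measurable
  ultimately show ?thesis
    using measurable_cong_sets by blast
qed

lemma prob_space_iid_sum_law:
  assumes "prob_space \<mu>" and "sets \<mu> = sets borel"
  shows "prob_space (iid_sum_law \<mu> n)"
  unfolding iid_sum_law_def
  using assms by (intro prob_space.prob_space_distr prob_space_PiM borel_measurable_PiM_sum) auto

lemma measurable_iid_sum_law:
  assumes "prob_space \<mu>" and "sets \<mu> = sets borel"
  shows "iid_sum_law \<mu> \<in> measure_pmf p \<rightarrow>\<^sub>M subprob_algebra borel"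
  using prob_space_iid_sum_law[OF assms]
  by (auto simp: measurable_cong_sets[OF sets_measure_pmf_count_space refl] space_subprob_algebra
      prob_space_imp_subprob_space)

lemma sets_compound_poisson [simp, measurable_cong]: "sets (compound_poisson lam \<mu>) = sets borel"
  unfolding compound_poisson_def by (subst sets_bind) (auto simp: set_pmf_not_empty)

lemma prob_space_compound_poisson:
  assumes "prob_space \<mu>" and "sets \<mu> = sets borel"
  shows "prob_space (compound_poisson lam \<mu>)"
  unfolding compound_poisson_def
  by (rule measure_pmf.prob_space_bind[OF _ measurable_iid_sum_law[OF assms]])
    (auto intro: prob_space_iid_sum_law[OF assms])

lemma distr_iid_sum_law:
  fixes L :: "'a::euclidean_space \<Rightarrow> 'b::euclidean_space"
  assumes \<mu>: "prob_space \<mu>" "sets \<mu> = sets borel" and L: "linear L"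
  shows "distr (iid_sum_law \<mu> n) borel L = iid_sum_law (distr \<mu> borel L) n"
proof -
  define \<nu> where "\<nu> = distr \<mu> borel L"
  have L_borel: "L \<in> borel_measurable \<mu>"
    by (subst measurable_cong_sets[OF \<mu>(2) refl]) (rule borel_measurable_linear[OF L])
  have L_meas: "L \<in> \<mu> \<rightarrow>\<^sub>M \<nu>"
    using L_borel by (simp add: \<nu>_def)
  have \<nu>: "prob_space \<nu>" "sets \<nu> = sets borel"
    unfolding \<nu>_def by (simp_all add: prob_space.prob_space_distr[OF \<mu>(1) L_borel])
  have L_comp: "compose {..<n} L \<in> PiM {..<n} (\<lambda>_. \<mu>) \<rightarrow>\<^sub>M PiM {..<n} (\<lambda>_. \<nu>)"
    unfolding compose_def
    by (intro measurable_restrict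
        measurable_compose[OF measurable_component_singleton[where M = "\<lambda>_. \<mu>"] L_meas])
  have "distr (iid_sum_law \<mu> n) borel L = distr (PiM {..<n} (\<lambda>_. \<mu>)) borel (L \<circ> (\<lambda>y. \<Sum>i<n. y i))"
    unfolding iid_sum_law_def
    by (rule distr_distr[OF borel_measurable_linear[OF L] borel_measurable_PiM_sum[OF \<mu>(2)]])
  also have "\<dots> = distr (PiM {..<n} (\<lambda>_. \<mu>)) borel ((\<lambda>y. \<Sum>i<n. y i) \<circ> compose {..<n} L)"
    by (rule distr_cong) (simp_all add: compose_def linear_sum[OF L])
  also have "\<dots> = distr (distr (PiM {..<n} (\<lambda>_. \<mu>)) (PiM {..<n} (\<lambda>_. \<nu>)) (compose {..<n} L)) borel
      (\<lambda>y. \<Sum>i<n. y i)"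
    by (rule distr_distr[symmetric, OF borel_measurable_PiM_sum[OF \<nu>(2)] L_comp])
  also have "distr (PiM {..<n} (\<lambda>_. \<mu>)) (PiM {..<n} (\<lambda>_. \<nu>)) (compose {..<n} L)
      = PiM {..<n} (\<lambda>_. distr \<mu> \<nu> L)"
    using \<mu>(1) \<nu>(1) L_meas by (intro distr_PiM_finite_prob_space') auto
  also have "distr \<mu> \<nu> L = \<nu>"
    unfolding \<nu>_def by (rule distr_cong) simp_all
  finally show ?thesis
    by (simp add: iid_sum_law_def \<nu>_def)
qed

lemma distr_compound_poisson:
  fixes L :: "'a::euclidean_space \<Rightarrow> 'b::euclidean_space"
  assumes \<mu>: "prob_space \<mu>" "sets \<mu> = sets borel" and L: "linear L"
  shows "distr (compound_poisson lam \<mu>) borel L = compound_poisson lam (distr \<mu> borel L)"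
  unfolding compound_poisson_def
  by (subst distr_bind[OF measurable_iid_sum_law[OF \<mu>] _ borel_measurable_linear[OF L]])
    (simp_all add: set_pmf_not_empty distr_iid_sum_law[OF \<mu> L])

lemma nn_integral_compound_poisson:
  assumes "prob_space \<mu>" and "sets \<mu> = sets borel" and "f \<in> borel_measurable borel"
  shows "(\<integral>\<^sup>+x. f x \<partial>compound_poisson lam \<mu>)
    = (\<integral>\<^sup>+n. (\<integral>\<^sup>+x. f x \<partial>iid_sum_law \<mu> n) \<partial>measure_pmf (Po lam))"
  unfolding compound_poisson_def
  by (rule nn_integral_bind[OF assms(3) measurable_iid_sum_law[OF assms(1,2)]])

lemma ennreal_mult_left_cancel:
  fixes a b c :: ennreal
  assumes "c \<noteq> 0" and "c \<noteq> top"
  shows "c * a = c * b \<longleftrightarrow> a = b"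
  using assms by (metis ennreal_mult_divide_eq mult.commute)

lemma norm_sq_parallelogram:
  fixes u v :: "'a::real_inner"
  shows "(norm (u + v))\<^sup>2 + (norm (u - v))\<^sup>2 = 2 * (norm u)\<^sup>2 + 2 * (norm v)\<^sup>2"
  by (simp add: power2_norm_eq_inner inner_add_left inner_add_right inner_diff_left inner_diff_right
      inner_commute)

text \<open>The parallelogram law lets the cross term cancel against the reflected measure without
  any integrability assumption.\<close>

lemma nn_integral_norm_sq_translate:
  fixes L :: "'a::euclidean_space \<Rightarrow> 'b::euclidean_space"
  assumes \<mu>: "prob_space \<mu>" "sets \<mu> = sets borel" and sym: "distr \<mu> borel uminus = \<mu>"
    and L: "linear L"
  shows "(\<integral>\<^sup>+y. ennreal ((norm (L (a + y)))\<^sup>2) \<partial>\<mu>)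
    = ennreal ((norm (L a))\<^sup>2) + (\<integral>\<^sup>+y. ennreal ((norm (L y))\<^sup>2) \<partial>\<mu>)"
proof -
  interpret prob_space \<mu> by (rule \<mu>(1))
  note [measurable] = borel_measurable_linear[OF L]
  have [measurable_cong]: "sets \<mu> = sets borel" by (rule \<mu>(2))
  have reflect: "(\<integral>\<^sup>+y. ennreal ((norm (L (a + y)))\<^sup>2) \<partial>\<mu>) = (\<integral>\<^sup>+y. ennreal ((norm (L (a - y)))\<^sup>2) \<partial>\<mu>)"
    by (subst (1) sym[symmetric], subst nn_integral_distr) simp_all
  have "2 * (\<integral>\<^sup>+y. ennreal ((norm (L (a + y)))\<^sup>2) \<partial>\<mu>)
      = (\<integral>\<^sup>+y. ennreal ((norm (L (a + y)))\<^sup>2) + ennreal ((norm (L (a - y)))\<^sup>2) \<partial>\<mu>)"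
    by (subst nn_integral_add) (simp_all add: reflect mult_2)
  also have "\<dots> = (\<integral>\<^sup>+y. ennreal (2 * (norm (L a))\<^sup>2 + 2 * (norm (L y))\<^sup>2) \<partial>\<mu>)"
    by (intro nn_integral_cong) (simp add: linear_add[OF L] linear_diff[OF L] norm_sq_parallelogram
        ennreal_plus[symmetric] del: ennreal_plus)
  also have "\<dots> = (\<integral>\<^sup>+y. 2 * ennreal ((norm (L a))\<^sup>2) + 2 * ennreal ((norm (L y))\<^sup>2) \<partial>\<mu>)"
    by (simp add: ennreal_plus ennreal_mult)
  also have "\<dots> = 2 * (ennreal ((norm (L a))\<^sup>2) + (\<integral>\<^sup>+y. ennreal ((norm (L y))\<^sup>2) \<partial>\<mu>))"
    by (simp add: nn_integral_add nn_integral_cmult emeasure_space_1 distrib_left)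
  finally show ?thesis
    by (subst (asm) ennreal_mult_left_cancel) simp_all
qed

lemma nn_integral_norm_sq_iid_sum_law:
  fixes L :: "'a::euclidean_space \<Rightarrow> 'b::euclidean_space"
  assumes \<mu>: "prob_space \<mu>" "sets \<mu> = sets borel" and sym: "distr \<mu> borel uminus = \<mu>"
    and L: "linear L"
  shows "(\<integral>\<^sup>+x. ennreal ((norm (L x))\<^sup>2) \<partial>iid_sum_law \<mu> n) = of_nat n * (\<integral>\<^sup>+y. ennreal ((norm (L y))\<^sup>2) \<partial>\<mu>)"
proof -
  interpret product_sigma_finite "\<lambda>_. \<mu>"
    by (simp add: product_sigma_finite_def \<mu>(1) prob_space_imp_sigma_finite)
  note [measurable] = borel_measurable_linear[OF L]
  have [measurable_cong]: "sets \<mu> = sets borel" by (rule \<mu>(2))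
  have "(\<integral>\<^sup>+y. ennreal ((norm (L (\<Sum>i<n. y i)))\<^sup>2) \<partial>PiM {..<n} (\<lambda>_. \<mu>))
      = of_nat n * (\<integral>\<^sup>+y. ennreal ((norm (L y))\<^sup>2) \<partial>\<mu>)"
  proof (induction n)
    case 0
    then show ?case by (simp add: linear_0[OF L])
  next
    case (Suc n)
    interpret prefix: prob_space "PiM {..<n} (\<lambda>_. \<mu>)"
      by (intro prob_space_PiM) (simp add: \<mu>(1))
    have "(\<integral>\<^sup>+y. ennreal ((norm (L (\<Sum>i<Suc n. y i)))\<^sup>2) \<partial>PiM {..<Suc n} (\<lambda>_. \<mu>))
        = (\<integral>\<^sup>+x. \<integral>\<^sup>+y. ennreal ((norm (L ((\<Sum>i<n. x i) + y)))\<^sup>2) \<partial>\<mu> \<partial>PiM {..<n} (\<lambda>_. \<mu>))"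
      unfolding lessThan_Suc
      by (subst product_nn_integral_insert) (simp_all add: add.commute cong: nn_integral_cong)
    also have "\<dots> = (\<integral>\<^sup>+x. ennreal ((norm (L (\<Sum>i<n. x i)))\<^sup>2) + (\<integral>\<^sup>+y. ennreal ((norm (L y))\<^sup>2) \<partial>\<mu>)
        \<partial>PiM {..<n} (\<lambda>_. \<mu>))"
      by (simp add: nn_integral_norm_sq_translate[OF \<mu> sym L])
    also have "\<dots> = of_nat (Suc n) * (\<integral>\<^sup>+y. ennreal ((norm (L y))\<^sup>2) \<partial>\<mu>)"
      by (simp add: nn_integral_add prefix.emeasure_space_1 Suc.IH distrib_right)
    finally show ?case .
  qed
  then show ?thesis
    unfolding iid_sum_law_def by (subst nn_integral_distr) simp_all
qed

lemma poisson_pmf_sums_mean: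
  assumes "0 < lam"
  shows "(\<lambda>n. real n * pmf (poisson_pmf lam) n) sums lam"
proof -
  have "(\<lambda>m. lam * exp (-lam) * (lam ^ m / fact m)) sums (lam * exp (-lam) * exp lam)"
    using exp_converges[of lam] by (intro sums_mult) (simp add: divide_inverse mult.commute)
  moreover have "lam * exp (-lam) * (lam ^ m / fact m) = real (Suc m) * pmf (poisson_pmf lam) (Suc m)"
    for m
    using assms by (simp add: fact_Suc field_simps del: of_nat_Suc)
  moreover have "lam * exp (-lam) * exp lam = lam"
    by (simp add: exp_minus field_simps)
  ultimately have "(\<lambda>m. real (Suc m) * pmf (poisson_pmf lam) (Suc m)) sums lam"
    by simp
  then show ?thesis
    using sums_Suc[of "\<lambda>n. real n * pmf (poisson_pmf lam) n"] by simp
qed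

lemma nn_integral_Po:
  assumes "0 \<le> lam"
  shows "(\<integral>\<^sup>+n. of_nat n \<partial>measure_pmf (Po lam)) = ennreal lam"
proof (cases "lam = 0")
  case True
  then show ?thesis by (simp add: Po_def)
next
  case False
  then have "(\<lambda>n. real n * pmf (poisson_pmf lam) n) sums lam"
    using assms by (intro poisson_pmf_sums_mean) simp
  then have "(\<Sum>n. ennreal (real n * pmf (poisson_pmf lam) n)) = ennreal lam"
    by (intro suminf_ennreal_eq) simp_all
  then show ?thesis
    using False by (simp add: Po_def nn_integral_measure_pmf nn_integral_count_space_nat
        ennreal_of_nat_eq_real_of_nat ennreal_mult mult.commute)
qed

lemma nn_integral_norm_sq_compound_poisson:
  fixes L :: "'a::euclidean_space \<Rightarrow> 'b::euclidean_space"
  assumes \<mu>: "prob_space \<mu>" "sets \<mu> = sets borel" and sym: "distr \<mu> borel uminus = \<mu>"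
    and L: "linear L" and lam: "0 \<le> lam"
  shows "(\<integral>\<^sup>+x. ennreal ((norm (L x))\<^sup>2) \<partial>compound_poisson lam \<mu>)
    = ennreal lam * (\<integral>\<^sup>+y. ennreal ((norm (L y))\<^sup>2) \<partial>\<mu>)"
proof -
  note [measurable] = borel_measurable_linear[OF L]
  have "(\<integral>\<^sup>+x. ennreal ((norm (L x))\<^sup>2) \<partial>compound_poisson lam \<mu>)
      = (\<integral>\<^sup>+n. of_nat n * (\<integral>\<^sup>+y. ennreal ((norm (L y))\<^sup>2) \<partial>\<mu>) \<partial>measure_pmf (Po lam))"
    by (simp add: nn_integral_compound_poisson[OF \<mu>] nn_integral_norm_sq_iid_sum_law[OF \<mu> sym L])
  also have "\<dots> = ennreal lam * (\<integral>\<^sup>+y. ennreal ((norm (L y))\<^sup>2) \<partial>\<mu>)"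
    by (simp add: nn_integral_multc nn_integral_Po[OF lam])
  finally show ?thesis .
qed

lemma distr_compound_poisson_uminus:
  fixes \<mu> :: "'a::euclidean_space measure"
  assumes "prob_space \<mu>" and "sets \<mu> = sets borel" and "distr \<mu> borel uminus = \<mu>"
  shows "distr (compound_poisson lam \<mu>) borel uminus = compound_poisson lam \<mu>"
  using distr_compound_poisson[OF assms(1,2) linear_uminus] assms(3) by simp

definition sum3_law :: "'a::euclidean_space measure \<Rightarrow> 'a measure \<Rightarrow> 'a measure \<Rightarrow> 'a measure" where
  "sum3_law A B C = distr (A \<Otimes>\<^sub>M (B \<Otimes>\<^sub>M C)) borel (\<lambda>(a, b, c). a + b + c)"

lemma sets_sum3_law [simp, measurable_cong]: "sets (sum3_law A B C) = sets borel"
  by (simp add: sum3_law_def)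

lemma borel_measurable_sum3:
  fixes A :: "'a::euclidean_space measure"
  assumes "sets A = sets borel" and "sets B = sets borel" and "sets C = sets borel"
  shows "(\<lambda>(a, b, c). a + b + c) \<in> borel_measurable (A \<Otimes>\<^sub>M (B \<Otimes>\<^sub>M C))"
proof -
  have "sets (A \<Otimes>\<^sub>M (B \<Otimes>\<^sub>M C)) = sets (borel \<Otimes>\<^sub>M (borel \<Otimes>\<^sub>M (borel :: 'a measure)))"
    using assms by (intro sets_pair_measure_cong) simp_all
  moreover have "(\<lambda>(a, b, c). a + b + c) \<in> borel_measurable (borel \<Otimes>\<^sub>M (borel \<Otimes>\<^sub>M (borel :: 'a measure)))"
    by measurable
  ultimately show ?thesis
    using measurable_cong_sets by blast
qed

lemma prob_space_sum3_law:
  assumes "prob_space A" "prob_space B" "prob_space C"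
    and "sets A = sets borel" "sets B = sets borel" "sets C = sets borel"
  shows "prob_space (sum3_law A B C)"
  unfolding sum3_law_def
  using assms by (intro prob_space.prob_space_distr prob_space_pair borel_measurable_sum3)

lemma distr_sum3_law:
  fixes L :: "'a::euclidean_space \<Rightarrow> 'b::euclidean_space"
  assumes prob: "prob_space A" "prob_space B" "prob_space C"
    and sets: "sets A = sets borel" "sets B = sets borel" "sets C = sets borel"
    and L: "linear L"
  shows "distr (sum3_law A B C) borel L
    = sum3_law (distr A borel L) (distr B borel L) (distr C borel L)"
proof -
  have "L \<in> M \<rightarrow>\<^sub>M borel" if "sets M = sets borel" for M :: "'a measure"
    by (subst measurable_cong_sets[OF that refl]) (rule borel_measurable_linear[OF L])
  then have L_meas: "L \<in> A \<rightarrow>\<^sub>M borel" "L \<in> B \<rightarrow>\<^sub>M borel" "L \<in> C \<rightarrow>\<^sub>M borel"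
    using sets by simp_all
  have pushed: "prob_space (distr B borel L)" "prob_space (distr C borel L)"
    using prob L_meas by (simp_all add: prob_space.prob_space_distr)
  have LL_BC: "(\<lambda>(b, c). (L b, L c)) \<in> B \<Otimes>\<^sub>M C \<rightarrow>\<^sub>M borel \<Otimes>\<^sub>M borel"
    using L_meas by measurable
  have BC: "distr (B \<Otimes>\<^sub>M C) (borel \<Otimes>\<^sub>M borel) (\<lambda>(b, c). (L b, L c)) = distr B borel L \<Otimes>\<^sub>M distr C borel L"
    by (rule pair_measure_distr[symmetric, OF L_meas(2,3)]) (simp add: pushed prob_space_imp_sigma_finite)
  have "distr (sum3_law A B C) borel L = distr (A \<Otimes>\<^sub>M (B \<Otimes>\<^sub>M C)) borel (L \<circ> (\<lambda>(a, b, c). a + b + c))"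
    unfolding sum3_law_def
    by (rule distr_distr[OF borel_measurable_linear[OF L] borel_measurable_sum3[OF sets]])
  also have "\<dots> = distr (A \<Otimes>\<^sub>M (B \<Otimes>\<^sub>M C)) borel
      ((\<lambda>(a, b, c). a + b + c) \<circ> (\<lambda>(a, bc). (L a, (\<lambda>(b, c). (L b, L c)) bc)))"
    by (rule distr_cong) (auto simp: linear_add[OF L])
  also have "\<dots> = distr (distr (A \<Otimes>\<^sub>M (B \<Otimes>\<^sub>M C)) (borel \<Otimes>\<^sub>M (borel \<Otimes>\<^sub>M borel))
      (\<lambda>(a, bc). (L a, (\<lambda>(b, c). (L b, L c)) bc))) borel (\<lambda>(a, b, c). a + b + c)"
  proof (rule distr_distr[symmetric])
    show "(\<lambda>(a, b, c). a + b + c) \<in> borel_measurable (borel \<Otimes>\<^sub>M (borel \<Otimes>\<^sub>M (borel :: 'b measure)))"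
      by measurable
    show "(\<lambda>(a, bc). (L a, (\<lambda>(b, c). (L b, L c)) bc)) \<in> A \<Otimes>\<^sub>M (B \<Otimes>\<^sub>M C) \<rightarrow>\<^sub>M borel \<Otimes>\<^sub>M (borel \<Otimes>\<^sub>M borel)"
      using L_meas(1) LL_BC by measurable
  qed
  also have "distr (A \<Otimes>\<^sub>M (B \<Otimes>\<^sub>M C)) (borel \<Otimes>\<^sub>M (borel \<Otimes>\<^sub>M borel)) (\<lambda>(a, bc). (L a, (\<lambda>(b, c). (L b, L c)) bc))
      = distr A borel L \<Otimes>\<^sub>M (distr B borel L \<Otimes>\<^sub>M distr C borel L)"
    unfolding BC[symmetric]
    by (rule pair_measure_distr[symmetric, OF L_meas(1) LL_BC])
      (simp add: BC pushed prob_space_pair prob_space_imp_sigma_finite)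
  finally show ?thesis
    unfolding sum3_law_def .
qed

lemma nn_integral_norm_sq_sum3_law:
  fixes L :: "'a::euclidean_space \<Rightarrow> 'b::euclidean_space"
  assumes prob: "prob_space A" "prob_space B" "prob_space C"
    and sets: "sets A = sets borel" "sets B = sets borel" "sets C = sets borel"
    and sym: "distr B borel uminus = B" "distr C borel uminus = C"
    and L: "linear L"
  shows "(\<integral>\<^sup>+x. ennreal ((norm (L x))\<^sup>2) \<partial>sum3_law A B C)
    = (\<integral>\<^sup>+x. ennreal ((norm (L x))\<^sup>2) \<partial>A) + (\<integral>\<^sup>+x. ennreal ((norm (L x))\<^sup>2) \<partial>B)
      + (\<integral>\<^sup>+x. ennreal ((norm (L x))\<^sup>2) \<partial>C)"
proof -
  interpret B: prob_space B by (rule prob(2))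
  interpret C: prob_space C by (rule prob(3))
  interpret BC: prob_space "B \<Otimes>\<^sub>M C" by (intro prob_space_pair prob(2,3))
  interpret A: prob_space A by (rule prob(1))
  note [measurable] = borel_measurable_linear[OF L]
  note [measurable_cong] = sets
  have "(\<integral>\<^sup>+x. ennreal ((norm (L x))\<^sup>2) \<partial>sum3_law A B C)
      = (\<integral>\<^sup>+p. ennreal ((norm (L (case p of (a, b, c) \<Rightarrow> a + b + c)))\<^sup>2) \<partial>(A \<Otimes>\<^sub>M (B \<Otimes>\<^sub>M C)))"
    unfolding sum3_law_def by (rule nn_integral_distr[OF borel_measurable_sum3[OF sets]]) simp
  also have "\<dots> = (\<integral>\<^sup>+a. \<integral>\<^sup>+b. \<integral>\<^sup>+c. ennreal ((norm (L (a + b + c)))\<^sup>2) \<partial>C \<partial>B \<partial>A)"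
  proof -
    have "(\<lambda>p. ennreal ((norm (L (case p of (a, b, c) \<Rightarrow> a + b + c)))\<^sup>2))
        \<in> borel_measurable (A \<Otimes>\<^sub>M (B \<Otimes>\<^sub>M C))"
      "\<And>a. (\<lambda>p. ennreal ((norm (L (a + fst p + snd p)))\<^sup>2)) \<in> borel_measurable (B \<Otimes>\<^sub>M C)"
      by measurable
    then show ?thesis
      by (simp add: BC.nn_integral_fst[symmetric] C.nn_integral_fst[symmetric] split_beta')
  qed
  also have "\<dots> = (\<integral>\<^sup>+a. ennreal ((norm (L a))\<^sup>2) + (\<integral>\<^sup>+x. ennreal ((norm (L x))\<^sup>2) \<partial>B)
      + (\<integral>\<^sup>+x. ennreal ((norm (L x))\<^sup>2) \<partial>C) \<partial>A)"
    by (simp add: nn_integral_norm_sq_translate[OF prob(3) sets(3) sym(2) L]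
        nn_integral_norm_sq_translate[OF prob(2) sets(2) sym(1) L] nn_integral_add B.emeasure_space_1)
  also have "\<dots> = (\<integral>\<^sup>+x. ennreal ((norm (L x))\<^sup>2) \<partial>A) + (\<integral>\<^sup>+x. ennreal ((norm (L x))\<^sup>2) \<partial>B)
      + (\<integral>\<^sup>+x. ennreal ((norm (L x))\<^sup>2) \<partial>C)"
    by (simp add: nn_integral_add A.emeasure_space_1 add.assoc)
  finally show ?thesis .
qed

definition odd_term ::
  "(real \<Rightarrow> real \<Rightarrow> 'a::topological_space \<Rightarrow> 'b::{topological_space, uminus}) \<Rightarrow> bool" where
  "odd_term g \<longleftrightarrow>
    (\<lambda>(x, s, r). g s r x) \<in> borel_measurable borel \<and> (\<forall>s r x. g (-s) r x = - g s r x)"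

definition LL_gen ::
  "real \<Rightarrow> real \<Rightarrow> real \<Rightarrow> (real \<Rightarrow> real \<Rightarrow> 'a \<Rightarrow> 'b::euclidean_space) \<Rightarrow>
    (real \<Rightarrow> real \<Rightarrow> 'a \<Rightarrow> 'b) \<Rightarrow> (real \<Rightarrow> real \<Rightarrow> 'a \<Rightarrow> 'b) \<Rightarrow> 'a measure \<Rightarrow> 'b measure" where
  "LL_gen a b c g h k M = sum3_law (compound_poisson a (sign_law g M))
    (compound_poisson b (sign_law h M)) (compound_poisson c (sign_law k M))"

lemma sets_LL_gen [simp, measurable_cong]: "sets (LL_gen a b c g h k M) = sets borel"
  by (simp add: LL_gen_def)

lemma LL_eq_LL_gen:
  "LL d t = LL_gen (t * d) ((1 - t) * d) ((1 - t) * d) both_coords first_coord second_coord"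
  by (simp add: fun_eq_iff LL_def LL_gen_def sum3_law_def compound_Po_eq_compound_poisson
      term_law_def sign_law_def)

lemma
  fixes g :: "real \<Rightarrow> real \<Rightarrow> 'a::second_countable_topology \<Rightarrow> 'b::euclidean_space"
  assumes "prob_space M" and "sets M = sets borel" and "odd_term g"
  shows prob_space_sign_law_odd: "prob_space (sign_law g M)"
    and distr_sign_law_odd_uminus: "distr (sign_law g M) borel uminus = sign_law g M"
  using assms by (auto simp: odd_term_def intro: prob_space_sign_law distr_sign_law_uminus)

lemma prob_space_LL_gen:
  fixes g :: "real \<Rightarrow> real \<Rightarrow> 'a::second_countable_topology \<Rightarrow> 'b::euclidean_space"
  assumes "prob_space M" and "sets M = sets borel" and "odd_term g" "odd_term h" "odd_term k"
  shows "prob_space (LL_gen a b c g h k M)"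
  unfolding LL_gen_def
  using assms
  by (intro prob_space_sum3_law prob_space_compound_poisson prob_space_sign_law_odd) simp_all

lemma distr_LL_gen:
  fixes g h k :: "real \<Rightarrow> real \<Rightarrow> 'a::second_countable_topology \<Rightarrow> 'b::euclidean_space"
    and g' h' k' :: "real \<Rightarrow> real \<Rightarrow> 'c::second_countable_topology \<Rightarrow> 'd::euclidean_space"
  assumes M: "prob_space M" "sets M = sets borel"
    and odd: "odd_term g" "odd_term h" "odd_term k" "odd_term g'" "odd_term h'" "odd_term k'"
    and L: "linear L" and P: "P \<in> borel_measurable borel"
    and commute: "\<And>s r x. L (g s r x) = g' s r (P x)" "\<And>s r x. L (h s r x) = h' s r (P x)"
      "\<And>s r x. L (k s r x) = k' s r (P x)"
  shows "distr (LL_gen a b c g h k M) borel L = LL_gen a b c g' h' k' (distr M borel P)"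
proof -
  have laws: "prob_space (sign_law f M)" "sets (sign_law f M) = sets borel"
    if "f \<in> {g, h, k}" for f
    using that prob_space_sign_law_odd[OF M] odd by auto
  have "distr (sign_law f M) borel L = sign_law f' (distr M borel P)"
    if "odd_term f" "odd_term f'" "\<And>s r x. L (f s r x) = f' s r (P x)" for f f'
    using that
    by (intro distr_sign_law M(2) borel_measurable_linear[OF L] P) (auto simp: odd_term_def)
  then show ?thesis
    unfolding LL_gen_def using laws odd commute
    by (simp add: distr_sum3_law prob_space_compound_poisson L distr_compound_poisson)
qed

lemma nn_integral_norm_sq_sign_law:
  fixes g :: "real \<Rightarrow> real \<Rightarrow> 'a::second_countable_topology \<Rightarrow> 'b::euclidean_space"
    and L :: "'b \<Rightarrow> 'c::euclidean_space"
  assumes "sets M = sets borel" and "(\<lambda>(x, s, r). g s r x) \<in> borel_measurable borel" and "linear L"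
  shows "(\<integral>\<^sup>+y. ennreal ((norm (L y))\<^sup>2) \<partial>sign_law g M)
    = (\<integral>\<^sup>+x. ennreal (sign_mean (\<lambda>s r. (norm (L (g s r x)))\<^sup>2)) \<partial>M)"
  using assms borel_measurable_linear[OF assms(3)]
  by (simp add: nn_integral_sign_law ennreal_sign_mean)

lemma nn_integral_norm_sq_LL_gen:
  fixes g h k :: "real \<Rightarrow> real \<Rightarrow> 'a::second_countable_topology \<Rightarrow> 'b::euclidean_space"
    and L :: "'b \<Rightarrow> 'c::euclidean_space"
  assumes M: "prob_space M" "sets M = sets borel"
    and odd: "odd_term g" "odd_term h" "odd_term k"
    and L: "linear L" and rates: "0 \<le> a" "0 \<le> b" "0 \<le> c"
  shows "(\<integral>\<^sup>+y. ennreal ((norm (L y))\<^sup>2) \<partial>LL_gen a b c g h k M)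
    = (\<integral>\<^sup>+x. ennreal (a * sign_mean (\<lambda>s r. (norm (L (g s r x)))\<^sup>2)
        + b * sign_mean (\<lambda>s r. (norm (L (h s r x)))\<^sup>2)
        + c * sign_mean (\<lambda>s r. (norm (L (k s r x)))\<^sup>2)) \<partial>M)"
proof -
  define m where "m f x = sign_mean (\<lambda>s r. (norm (L (f s r x)))\<^sup>2)"
    for f :: "real \<Rightarrow> real \<Rightarrow> 'a \<Rightarrow> 'b" and x
  have m_nonneg: "0 \<le> m f x" for f x
    by (simp add: m_def sign_mean_def)
  have m_meas: "(\<lambda>x. ennreal (m f x)) \<in> borel_measurable M" if "odd_term f" for f
  proof -
    have "(\<lambda>(x, s, r). f s r x) \<in> borel_measurable borel"
      using that by (simp add: odd_term_def)
    note [measurable] = borel_measurable_linear[OF L] borel_measurable_term[OF this]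
    have "(\<lambda>x. ennreal (m f x)) \<in> borel_measurable borel"
      unfolding m_def sign_mean_def by measurable
    then show ?thesis
      by (simp add: measurable_cong_sets[OF M(2) refl])
  qed
  have "(\<integral>\<^sup>+y. ennreal ((norm (L y))\<^sup>2) \<partial>LL_gen a b c g h k M)
      = ennreal a * (\<integral>\<^sup>+x. ennreal (m g x) \<partial>M) + ennreal b * (\<integral>\<^sup>+x. ennreal (m h x) \<partial>M)
        + ennreal c * (\<integral>\<^sup>+x. ennreal (m k x) \<partial>M)"
    unfolding LL_gen_def m_def using M odd L rates
    by (simp add: odd_term_def nn_integral_norm_sq_sum3_law prob_space_compound_poisson
        prob_space_sign_law_odd distr_compound_poisson_uminus distr_sign_law_odd_uminus nn_integral_norm_sq_compound_poisson
        nn_integral_norm_sq_sign_law)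
  also have "\<dots> = (\<integral>\<^sup>+x. ennreal (a * m g x + b * m h x + c * m k x) \<partial>M)"
    using m_meas odd rates m_nonneg
    by (simp add: nn_integral_add nn_integral_cmult ennreal_plus ennreal_mult)
  finally show ?thesis
    by (simp add: m_def)
qed

section \<open>The summands of the log-likelihood operator\<close>

lemma one_plus_exp_neq_zero [simp]: "1 + exp x \<noteq> (0::real)" "exp x + 1 \<noteq> (0::real)"
  using exp_gt_zero[of x] by linarith+

lemma tanh_half: "tanh (x / 2) = (exp x - 1) / (exp x + (1::real))"
proof -
  have "(1 - 1 / E) / (1 + 1 / E) = (E - 1) / (E + 1)" if "0 < E" for E :: real
  proof -
    have "1 - 1 / E = (E - 1) / E" "1 + 1 / E = (E + 1) / E"
      using that by (simp_all add: field_simps)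
    with that show ?thesis by simp
  qed
  then have "(1 - 1 / exp x) / (1 + 1 / exp x) = (exp x - 1) / (exp x + 1)"
    by simp
  then show ?thesis
    by (simp add: tanh_real_altdef exp_minus inverse_eq_divide)
qed

definition softplus :: "real \<Rightarrow> real" where
  "softplus x = ln (1 + exp x)"

lemma LLterm_minus_sign: "LLterm (- s) r x = - LLterm s r x"
  by (simp add: LLterm_def)

lemma LLterm_zero: "LLterm s r 0 = - s * ln 2"
  by (simp add: LLterm_def ln_div)

lemma
  shows LLterm_1_1: "LLterm 1 1 x = x - softplus x"
    and LLterm_1_minus_1: "LLterm 1 (- 1) x = - softplus x"
proof -
  have pos: "0 < 1 + exp x"
    by (simp add: add_pos_pos)
  then have "(1 + tanh (x / 2)) / 2 = exp x / (1 + exp x)"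
    "(1 + - 1 * tanh (x / 2)) / 2 = 1 / (1 + exp x)"
    unfolding tanh_half by (simp_all add: field_simps)
  then have "LLterm 1 1 x = ln (exp x / (1 + exp x))" "LLterm 1 (- 1) x = ln (1 / (1 + exp x))"
    unfolding LLterm_def mult_1_left by (simp_all only:)
  with pos show "LLterm 1 1 x = x - softplus x" "LLterm 1 (- 1) x = - softplus x"
    by (simp_all add: softplus_def ln_div)
qed

lemma softplus_diff_bounds:
  assumes "b \<le> a"
  shows "0 \<le> softplus a - softplus b" and "softplus a - softplus b \<le> a - b"
proof -
  show "0 \<le> softplus a - softplus b"
    using assms by (simp add: softplus_def add_pos_pos)
  have "1 \<le> exp (a - b)"
    using assms by simp
  then have "1 + exp a \<le> exp (a - b) * (1 + exp b)"
    by (simp add: distrib_left exp_diff)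
  then have "ln (1 + exp a) \<le> ln (exp (a - b) * (1 + exp b))"
    by (simp add: add_pos_pos)
  then show "softplus a - softplus b \<le> a - b"
    by (simp add: softplus_def ln_mult)
qed

text \<open>With u = a - b and v = softplus a - softplus b, which lies between 0 and u, the claim
  reads (u - v)^2 + v^2 \<le> u^2.\<close>

lemma LLterm_pair_dist_le:
  "(LLterm 1 1 a - LLterm 1 1 b)\<^sup>2 + (LLterm 1 (-1) a - LLterm 1 (-1) b)\<^sup>2 \<le> (a - b)\<^sup>2"
proof -
  define v where "v = softplus a - softplus b"
  have "v * (v - (a - b)) \<le> 0"
  proof (cases "b \<le> a")
    case True
    then show ?thesis
      using softplus_diff_bounds[OF True] by (simp add: v_def mult_nonneg_nonpos)
  next
    case False
    then show ?thesis
      using softplus_diff_bounds[of a b] by (simp add: v_def mult_nonpos_nonneg)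
  qed
  moreover have "LLterm 1 1 a - LLterm 1 1 b = (a - b) - v" "LLterm 1 (-1) a - LLterm 1 (-1) b = - v"
    by (simp_all add: v_def LLterm_1_1 LLterm_1_minus_1)
  ultimately show ?thesis
    by (simp only:) (simp add: power2_eq_square algebra_simps)
qed

lemma sign_mean_LLterm_diff_sq:
  "sign_mean (\<lambda>s r. (LLterm s r a - LLterm s r b)\<^sup>2) \<le> (a - b)\<^sup>2 / 2"
proof -
  have "(LLterm (- 1) r a - LLterm (- 1) r b)\<^sup>2 = (LLterm 1 r a - LLterm 1 r b)\<^sup>2" for r
    by (simp add: LLterm_minus_sign power2_commute)
  then show ?thesis
    using LLterm_pair_dist_le[of a b] by (simp add: sign_mean_def)
qed

lemma sign_mean_LLterm_sq: "sign_mean (\<lambda>s r. (LLterm s r a)\<^sup>2) \<le> a\<^sup>2 + 2"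
proof -
  have split: "(LLterm s r a)\<^sup>2 \<le> 2 * (LLterm s r a - LLterm s r 0)\<^sup>2 + 2 * (ln 2)\<^sup>2"
    if "s\<^sup>2 = 1" for s r
  proof -
    have "(LLterm s r a)\<^sup>2 \<le> 2 * (LLterm s r a - LLterm s r 0)\<^sup>2 + 2 * (LLterm s r 0)\<^sup>2"
      using zero_le_power2[of "LLterm s r a - 2 * LLterm s r 0"]
      by (simp add: power2_eq_square algebra_simps)
    then show ?thesis
      using that by (simp add: LLterm_zero power_mult_distrib)
  qed
  have "(ln 2)\<^sup>2 \<le> (1::real)"
    using ln_le_minus_one[of 2] ln_ge_zero[of 2] by (simp add: power_le_one)
  then show ?thesis
    using split[of 1 1] split[of 1 "- 1"] split[of "- 1" 1] split[of "- 1" "- 1"]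
      sign_mean_LLterm_diff_sq[of a 0]
    by (simp add: sign_mean_def)
qed

lemma power2_norm_Pair: "(norm (a, b))\<^sup>2 = (norm a)\<^sup>2 + (norm b)\<^sup>2"
  by (simp add: norm_Pair)

lemma sign_mean_norm_sq_coords:
  fixes x :: pt
  shows "sign_mean (\<lambda>s r. (norm (both_coords s r x))\<^sup>2) \<le> (norm x)\<^sup>2 + 4"
    and "sign_mean (\<lambda>s r. (norm (first_coord s r x))\<^sup>2) \<le> (norm x)\<^sup>2 + 4"
    and "sign_mean (\<lambda>s r. (norm (second_coord s r x))\<^sup>2) \<le> (norm x)\<^sup>2 + 4"
proof -
  obtain a b where x: "x = (a, b)"
    by fastforce
  have "(norm (both_coords s r x))\<^sup>2 = (LLterm s r a)\<^sup>2 + (LLterm s r b)\<^sup>2"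
    "(norm (first_coord s r x))\<^sup>2 = (LLterm s r a)\<^sup>2" "(norm (second_coord s r x))\<^sup>2 = (LLterm s r b)\<^sup>2"
    "(norm x)\<^sup>2 = a\<^sup>2 + b\<^sup>2" for s r
    by (simp_all add: x both_coords_def first_coord_def second_coord_def power2_norm_Pair)
  then show "sign_mean (\<lambda>s r. (norm (both_coords s r x))\<^sup>2) \<le> (norm x)\<^sup>2 + 4"
    "sign_mean (\<lambda>s r. (norm (first_coord s r x))\<^sup>2) \<le> (norm x)\<^sup>2 + 4"
    "sign_mean (\<lambda>s r. (norm (second_coord s r x))\<^sup>2) \<le> (norm x)\<^sup>2 + 4"
    using sign_mean_LLterm_sq[of a] sign_mean_LLterm_sq[of b]
    by (simp_all add: sign_mean_add) (use zero_le_power2[of a] zero_le_power2[of b] in linarith)+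
qed

lemma sign_mean_dist_sq_coords:
  fixes x y :: pt
  shows "sign_mean (\<lambda>s r. (norm (both_coords s r x - both_coords s r y))\<^sup>2) \<le> (norm (x - y))\<^sup>2 / 2"
    and "sign_mean (\<lambda>s r. (norm (first_coord s r x - first_coord s r y))\<^sup>2) \<le> (fst x - fst y)\<^sup>2 / 2"
    and "sign_mean (\<lambda>s r. (norm (second_coord s r x - second_coord s r y))\<^sup>2) \<le> (snd x - snd y)\<^sup>2 / 2"
proof -
  obtain a b a' b' where x: "x = (a, b)" and y: "y = (a', b')"
    by fastforce
  have "(norm (both_coords s r x - both_coords s r y))\<^sup>2
      = (LLterm s r a - LLterm s r a')\<^sup>2 + (LLterm s r b - LLterm s r b')\<^sup>2"
    "(norm (first_coord s r x - first_coord s r y))\<^sup>2 = (LLterm s r a - LLterm s r a')\<^sup>2"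
    "(norm (second_coord s r x - second_coord s r y))\<^sup>2 = (LLterm s r b - LLterm s r b')\<^sup>2"
    "(norm (x - y))\<^sup>2 = (a - a')\<^sup>2 + (b - b')\<^sup>2" for s r
    by (simp_all add: x y both_coords_def first_coord_def second_coord_def power2_norm_Pair)
  then show "sign_mean (\<lambda>s r. (norm (both_coords s r x - both_coords s r y))\<^sup>2) \<le> (norm (x - y))\<^sup>2 / 2"
    "sign_mean (\<lambda>s r. (norm (first_coord s r x - first_coord s r y))\<^sup>2) \<le> (fst x - fst y)\<^sup>2 / 2"
    "sign_mean (\<lambda>s r. (norm (second_coord s r x - second_coord s r y))\<^sup>2) \<le> (snd x - snd y)\<^sup>2 / 2"
    using sign_mean_LLterm_diff_sq[of a a'] sign_mean_LLterm_diff_sq[of b b']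
    by (simp_all add: x y sign_mean_add)
qed

lemma odd_term_coords: "odd_term both_coords" "odd_term first_coord" "odd_term second_coord"
proof -
  have [measurable]: "(tanh :: real \<Rightarrow> real) \<in> borel_measurable borel"
    by (intro borel_measurable_continuous_onI continuous_intros) auto
  show "odd_term both_coords" "odd_term first_coord" "odd_term second_coord"
    unfolding odd_term_def both_coords_def first_coord_def second_coord_def LLterm_def
    by (simp_all add: borel_prod[symmetric]) measurable
qed

lemma LL_in_W2space:
  assumes "\<rho> \<in> W2space" and t: "0 \<le> t" "t \<le> 1" and d: "0 \<le> d"
  shows "LL d t \<rho> \<in> W2space"
proof -
  have \<rho>: "prob_space \<rho>" "sets \<rho> = sets borel" and moment: "(\<integral>\<^sup>+x. ennreal ((norm x)\<^sup>2) \<partial>\<rho>) < top"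
    using assms(1) by (simp_all add: W2space_def)
  define K where "K = t * d + 2 * ((1 - t) * d)"
  have weights: "0 \<le> t * d" "0 \<le> (1 - t) * d"
    using t d by simp_all
  have pointwise: "t * d * sign_mean (\<lambda>s r. (norm (both_coords s r x))\<^sup>2)
      + (1 - t) * d * sign_mean (\<lambda>s r. (norm (first_coord s r x))\<^sup>2)
      + (1 - t) * d * sign_mean (\<lambda>s r. (norm (second_coord s r x))\<^sup>2) \<le> K * ((norm x)\<^sup>2 + 4)" for x
    using mult_left_mono[OF sign_mean_norm_sq_coords(1)[of x] weights(1)]
      mult_left_mono[OF sign_mean_norm_sq_coords(2)[of x] weights(2)]
      mult_left_mono[OF sign_mean_norm_sq_coords(3)[of x] weights(2)]
    by (simp add: K_def algebra_simps)
  have "(\<integral>\<^sup>+x. ennreal ((norm x)\<^sup>2) \<partial>LL d t \<rho>)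
      = (\<integral>\<^sup>+x. ennreal (t * d * sign_mean (\<lambda>s r. (norm (both_coords s r x))\<^sup>2)
        + (1 - t) * d * sign_mean (\<lambda>s r. (norm (first_coord s r x))\<^sup>2)
        + (1 - t) * d * sign_mean (\<lambda>s r. (norm (second_coord s r x))\<^sup>2)) \<partial>\<rho>)"
    unfolding LL_eq_LL_gen
    using nn_integral_norm_sq_LL_gen[OF \<rho> odd_term_coords linear_id weights weights(2)]
    by (simp add: id_def)
  also have "\<dots> \<le> (\<integral>\<^sup>+x. ennreal K * (ennreal ((norm x)\<^sup>2) + 4) \<partial>\<rho>)"
    using weights by (intro nn_integral_mono order_trans[OF ennreal_leI[OF pointwise]])
      (simp add: K_def ennreal_mult ennreal_plus)
  also have "\<dots> = ennreal K * ((\<integral>\<^sup>+x. ennreal ((norm x)\<^sup>2) \<partial>\<rho>) + 4)"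
    using \<rho> by (simp add: nn_integral_cmult nn_integral_add prob_space.emeasure_space_1
        measurable_cong_sets[OF \<rho>(2) refl])
  also have "\<dots> < top"
    using moment by (simp add: ennreal_mult_less_top)
  finally show ?thesis
    using \<rho> weights by (simp add: W2space_def LL_eq_LL_gen prob_space_LL_gen odd_term_coords)
qed

section \<open>The synchronous coupling\<close>

definition sync :: "(real \<Rightarrow> real \<Rightarrow> 'a \<Rightarrow> 'b) \<Rightarrow> real \<Rightarrow> real \<Rightarrow> 'a \<times> 'a \<Rightarrow> 'b \<times> 'b" where
  "sync g s r z = (g s r (fst z), g s r (snd z))"

lemma odd_term_sync:
  fixes g :: "real \<Rightarrow> real \<Rightarrow> 'a::second_countable_topology \<Rightarrow> 'b::euclidean_space"
  assumes "odd_term g"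
  shows "odd_term (sync g)"
proof -
  have G: "(\<lambda>(x, s, r). g s r x) \<in> borel_measurable borel"
    using assms by (simp add: odd_term_def)
  have "(\<lambda>p. (fst (fst p), snd p)) \<in> borel_measurable (borel :: (('a \<times> 'a) \<times> real \<times> real) measure)"
    "(\<lambda>p. (snd (fst p), snd p)) \<in> borel_measurable (borel :: (('a \<times> 'a) \<times> real \<times> real) measure)"
    by (intro borel_measurable_continuous_onI continuous_intros)+
  from measurable_compose[OF this(1) G] measurable_compose[OF this(2) G]
  have "(\<lambda>(z, s, r). sync g s r z) \<in> borel_measurable (borel :: (('a \<times> 'a) \<times> real \<times> real) measure)"
    unfolding sync_def borel_prod[symmetric] by (simp add: split_beta')
  with assms show ?thesis
    by (simp add: odd_term_def sync_def)
qed

definition sync_coupling :: "real \<Rightarrow> real \<Rightarrow> (pt \<times> pt) measure \<Rightarrow> (pt \<times> pt) measure" where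
  "sync_coupling d t C = LL_gen (t * d) ((1 - t) * d) ((1 - t) * d)
    (sync both_coords) (sync first_coord) (sync second_coord) C"

lemma sync_coupling_couplings:
  assumes "C \<in> couplings \<rho> \<nu>"
  shows "sync_coupling d t C \<in> couplings (LL d t \<rho>) (LL d t \<nu>)"
proof -
  have C: "prob_space C" "sets C = sets borel"
    and marginals: "distr C borel fst = \<rho>" "distr C borel snd = \<nu>"
    using assms by (auto simp: couplings_def)
  note odd = odd_term_coords odd_term_sync[OF odd_term_coords(1)] odd_term_sync[OF odd_term_coords(2)]
    odd_term_sync[OF odd_term_coords(3)]
  have "distr (sync_coupling d t C) borel fst = LL d t \<rho>"
    "distr (sync_coupling d t C) borel snd = LL d t \<nu>"
    unfolding sync_coupling_def LL_eq_LL_gen marginals[symmetric]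
    by (intro distr_LL_gen C odd linear_fst linear_snd measurable_fst measurable_snd;
        simp add: sync_def borel_prod[symmetric])+
  moreover have "prob_space (sync_coupling d t C)"
    unfolding sync_coupling_def by (intro prob_space_LL_gen C odd)
  ultimately show ?thesis
    by (simp add: couplings_def sync_coupling_def)
qed

lemma sync_coupling_cost:
  assumes "C \<in> couplings \<rho> \<nu>" and t: "0 \<le> t" "t \<le> 1" and d: "0 \<le> d"
  shows "(\<integral>\<^sup>+p. ennreal ((dist (fst p) (snd p))\<^sup>2) \<partial>sync_coupling d t C)
    \<le> ennreal (d / 2) * (\<integral>\<^sup>+p. ennreal ((dist (fst p) (snd p))\<^sup>2) \<partial>C)"
proof -
  have C: "prob_space C" "sets C = sets borel"
    using assms(1) by (auto simp: couplings_def)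
  define D where "D p = fst p - snd p" for p :: "pt \<times> pt"
  have D: "linear D"
    unfolding D_def by (intro linear_compose_sub linear_fst linear_snd)
  have dist_D: "dist (fst p) (snd p) = norm (D p)" for p
    by (simp add: D_def dist_norm)
  have pointwise: "t * d * sign_mean (\<lambda>s r. (norm (D (sync both_coords s r z)))\<^sup>2)
      + (1 - t) * d * sign_mean (\<lambda>s r. (norm (D (sync first_coord s r z)))\<^sup>2)
      + (1 - t) * d * sign_mean (\<lambda>s r. (norm (D (sync second_coord s r z)))\<^sup>2)
      \<le> d / 2 * (norm (D z))\<^sup>2" for z
  proof -
    obtain x y where z: "z = (x, y)"
      by (cases z)
    have split: "(norm (x - y))\<^sup>2 = (fst x - fst y)\<^sup>2 + (snd x - snd y)\<^sup>2"
      by (cases x; cases y) (simp add: power2_norm_Pair)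
    have weights: "0 \<le> t * d" "0 \<le> (1 - t) * d"
      using t d by simp_all
    show ?thesis
      using mult_left_mono[OF sign_mean_dist_sq_coords(1)[of x y] weights(1)]
        mult_left_mono[OF sign_mean_dist_sq_coords(2)[of x y] weights(2)]
        mult_left_mono[OF sign_mean_dist_sq_coords(3)[of x y] weights(2)]
      by (simp add: z D_def sync_def split algebra_simps)
  qed
  note odd = odd_term_sync[OF odd_term_coords(1)] odd_term_sync[OF odd_term_coords(2)]
    odd_term_sync[OF odd_term_coords(3)]
  have "(\<integral>\<^sup>+p. ennreal ((norm (D p))\<^sup>2) \<partial>sync_coupling d t C)
      = (\<integral>\<^sup>+z. ennreal (t * d * sign_mean (\<lambda>s r. (norm (D (sync both_coords s r z)))\<^sup>2)
      + (1 - t) * d * sign_mean (\<lambda>s r. (norm (D (sync first_coord s r z)))\<^sup>2)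
      + (1 - t) * d * sign_mean (\<lambda>s r. (norm (D (sync second_coord s r z)))\<^sup>2)) \<partial>C)"
    unfolding sync_coupling_def using t d by (intro nn_integral_norm_sq_LL_gen C odd D) simp_all
  also have "\<dots> \<le> (\<integral>\<^sup>+z. ennreal (d / 2 * (norm (D z))\<^sup>2) \<partial>C)"
    by (intro nn_integral_mono ennreal_leI pointwise)
  also have "\<dots> = (\<integral>\<^sup>+z. ennreal (d / 2) * ennreal ((norm (D z))\<^sup>2) \<partial>C)"
    using d by (intro nn_integral_cong) (subst ennreal_mult; simp)
  also have "\<dots> = ennreal (d / 2) * (\<integral>\<^sup>+z. ennreal ((norm (D z))\<^sup>2) \<partial>C)"
  proof (rule nn_integral_cmult)
    note [measurable] = borel_measurable_linear[OF D]
    show "(\<lambda>z. ennreal ((norm (D z))\<^sup>2)) \<in> borel_measurable C"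
      using C(2) by measurable
  qed
  finally show ?thesis
    by (simp add: dist_D)
qed

section \<open>Contraction in the Wasserstein distance\<close>

lemma W2sq_LL_le:
  assumes "0 \<le> t" and "t \<le> 1" and "0 < d"
  shows "W2sq (LL d t \<rho>) (LL d t \<nu>) \<le> ennreal (d / 2) * W2sq \<rho> \<nu>"
proof -
  define X where "X = W2sq (LL d t \<rho>) (LL d t \<nu>)"
  have "X / ennreal (d / 2) \<le> W2sq \<rho> \<nu>"
    unfolding W2sq_def
  proof (intro INF_greatest divide_le_posI_ennreal)
    fix C assume C: "C \<in> couplings \<rho> \<nu>"
    have "X \<le> (\<integral>\<^sup>+p. ennreal ((dist (fst p) (snd p))\<^sup>2) \<partial>sync_coupling d t C)"
      unfolding X_def W2sq_def by (rule INF_lower[OF sync_coupling_couplings[OF C]])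
    also have "\<dots> \<le> ennreal (d / 2) * (\<integral>\<^sup>+p. ennreal ((dist (fst p) (snd p))\<^sup>2) \<partial>C)"
      using assms by (intro sync_coupling_cost[OF C]) simp_all
    finally show "X \<le> ennreal (d / 2) * (\<integral>\<^sup>+p. ennreal ((dist (fst p) (snd p))\<^sup>2) \<partial>C)" .
  qed (use assms in simp)
  then have "ennreal (d / 2) * (X / ennreal (d / 2)) \<le> ennreal (d / 2) * W2sq \<rho> \<nu>"
    by (rule mult_left_mono) simp
  then show ?thesis
    using assms by (simp add: X_def ennreal_times_divide mult.commute[of "ennreal (d / 2)"]
        ennreal_mult_divide_eq)
qed

lemma nn_integral_coupling_marginals:
  assumes "C \<in> couplings \<rho> \<nu>" and f: "f \<in> borel_measurable borel"
  shows "(\<integral>\<^sup>+p. f (fst p) \<partial>C) = (\<integral>\<^sup>+x. f x \<partial>\<rho>)"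
    and "(\<integral>\<^sup>+p. f (snd p) \<partial>C) = (\<integral>\<^sup>+x. f x \<partial>\<nu>)"
proof -
  have C: "sets C = sets borel" "distr C borel fst = \<rho>" "distr C borel snd = \<nu>"
    using assms(1) by (auto simp: couplings_def)
  have "fst \<in> C \<rightarrow>\<^sub>M borel" "snd \<in> C \<rightarrow>\<^sub>M borel"
    using C(1) by (simp_all add: borel_prod[symmetric] measurable_cong_sets[OF C(1) refl])
  with f show "(\<integral>\<^sup>+p. f (fst p) \<partial>C) = (\<integral>\<^sup>+x. f x \<partial>\<rho>)" "(\<integral>\<^sup>+p. f (snd p) \<partial>C) = (\<integral>\<^sup>+x. f x \<partial>\<nu>)"
    unfolding C(2,3)[symmetric] by (simp_all add: nn_integral_distr)
qed

lemma power2_dist_le: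
  fixes a b :: "'a::real_normed_vector"
  shows "(dist a b)\<^sup>2 \<le> 2 * (norm a)\<^sup>2 + 2 * (norm b)\<^sup>2"
proof -
  have "(dist a b)\<^sup>2 \<le> (norm a + norm b)\<^sup>2"
    by (intro power_mono) (simp_all add: dist_norm norm_triangle_ineq4)
  also have "\<dots> \<le> 2 * (norm a)\<^sup>2 + 2 * (norm b)\<^sup>2"
    using zero_le_power2[of "norm a - norm b"] by (simp add: power2_eq_square algebra_simps)
  finally show ?thesis .
qed

lemma coupling_cost_le:
  assumes "C \<in> couplings \<rho> \<nu>"
  shows "(\<integral>\<^sup>+p. ennreal ((dist (fst p) (snd p))\<^sup>2) \<partial>C)
    \<le> 2 * (\<integral>\<^sup>+x. ennreal ((norm x)\<^sup>2) \<partial>\<rho>) + 2 * (\<integral>\<^sup>+x. ennreal ((norm x)\<^sup>2) \<partial>\<nu>)"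
proof -
  have "(\<integral>\<^sup>+p. ennreal ((dist (fst p) (snd p))\<^sup>2) \<partial>C)
      \<le> (\<integral>\<^sup>+p. 2 * ennreal ((norm (fst p))\<^sup>2) + 2 * ennreal ((norm (snd p))\<^sup>2) \<partial>C)"
    by (intro nn_integral_mono order_trans[OF ennreal_leI[OF power2_dist_le]])
      (simp add: ennreal_plus ennreal_mult)
  also have "\<dots> = 2 * (\<integral>\<^sup>+p. ennreal ((norm (fst p))\<^sup>2) \<partial>C) + 2 * (\<integral>\<^sup>+p. ennreal ((norm (snd p))\<^sup>2) \<partial>C)"
  proof -
    have [measurable_cong]: "sets C = sets (borel \<Otimes>\<^sub>M (borel :: pt measure))"
      using assms by (simp add: couplings_def borel_prod[symmetric])
    show ?thesis
      by (simp add: nn_integral_add nn_integral_cmult)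
  qed
  also have "\<dots> = 2 * (\<integral>\<^sup>+x. ennreal ((norm x)\<^sup>2) \<partial>\<rho>) + 2 * (\<integral>\<^sup>+x. ennreal ((norm x)\<^sup>2) \<partial>\<nu>)"
  proof -
    have "(\<lambda>x. ennreal ((norm x)\<^sup>2)) \<in> borel_measurable (borel :: pt measure)"
      by measurable
    from nn_integral_coupling_marginals[OF assms this] show ?thesis
      by simp
  qed
  finally show ?thesis .
qed

lemma distr_pair_measure_snd:
  assumes "prob_space M" and "prob_space N"
  shows "distr (M \<Otimes>\<^sub>M N) N snd = N"
proof (rule measure_eqI)
  interpret M: prob_space M by (rule assms(1))
  interpret N: prob_space N by (rule assms(2))
  interpret pair_sigma_finite M N ..
  fix A assume "A \<in> sets (distr (M \<Otimes>\<^sub>M N) N snd)"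
  then have A: "A \<in> sets N" by simp
  then have "emeasure (distr (M \<Otimes>\<^sub>M N) N snd) A = emeasure (M \<Otimes>\<^sub>M N) (space M \<times> A)"
    by (auto simp: emeasure_distr space_pair_measure dest: sets.sets_into_space
        intro!: arg_cong2[where f = emeasure])
  with A show "emeasure (distr (M \<Otimes>\<^sub>M N) N snd) A = emeasure N A"
    by (simp add: N.emeasure_pair_measure_Times M.emeasure_space_1)
qed simp

lemma pair_measure_couplings:
  assumes "prob_space \<rho>" "sets \<rho> = sets borel" "prob_space \<nu>" "sets \<nu> = sets borel"
  shows "\<rho> \<Otimes>\<^sub>M \<nu> \<in> couplings \<rho> \<nu>"
proof -
  interpret \<nu>: prob_space \<nu> by (rule assms(3))
  have "sets (\<rho> \<Otimes>\<^sub>M \<nu>) = sets (borel \<Otimes>\<^sub>M (borel :: pt measure))"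
    using assms by (intro sets_pair_measure_cong)
  then have "sets (\<rho> \<Otimes>\<^sub>M \<nu>) = sets (borel :: (pt \<times> pt) measure)"
    by (simp only: borel_prod)
  moreover have "distr (\<rho> \<Otimes>\<^sub>M \<nu>) borel fst = distr (\<rho> \<Otimes>\<^sub>M \<nu>) \<rho> fst"
    "distr (\<rho> \<Otimes>\<^sub>M \<nu>) borel snd = distr (\<rho> \<Otimes>\<^sub>M \<nu>) \<nu> snd"
    using assms by (auto intro: distr_cong)
  ultimately show ?thesis
    using assms by (simp add: couplings_def \<nu>.distr_pair_fst distr_pair_measure_snd prob_space_pair)
qed

lemma W2sq_less_top:
  assumes "\<rho> \<in> W2space" and "\<nu> \<in> W2space"
  shows "W2sq \<rho> \<nu> < top"
proof -
  have C: "\<rho> \<Otimes>\<^sub>M \<nu> \<in> couplings \<rho> \<nu>"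
    using assms by (intro pair_measure_couplings) (simp_all add: W2space_def)
  have "W2sq \<rho> \<nu> \<le> (\<integral>\<^sup>+p. ennreal ((dist (fst p) (snd p))\<^sup>2) \<partial>(\<rho> \<Otimes>\<^sub>M \<nu>))"
    unfolding W2sq_def by (rule INF_lower[OF C])
  also have "\<dots> \<le> 2 * (\<integral>\<^sup>+x. ennreal ((norm x)\<^sup>2) \<partial>\<rho>) + 2 * (\<integral>\<^sup>+x. ennreal ((norm x)\<^sup>2) \<partial>\<nu>)"
    by (rule coupling_cost_le[OF C])
  also have "\<dots> < top"
    using assms by (simp add: W2space_def ennreal_mult_less_top)
  finally show ?thesis .
qed

lemma W2_LL_le:
  assumes "\<rho> \<in> W2space" "\<nu> \<in> W2space" and "0 \<le> t" "t \<le> 1" "0 < d"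
  shows "W2 (LL d t \<rho>) (LL d t \<nu>) \<le> sqrt (d / 2) * W2 \<rho> \<nu>"
proof -
  have "ennreal (d / 2) * W2sq \<rho> \<nu> < top"
    using W2sq_less_top[OF assms(1,2)] by (simp add: ennreal_mult_less_top)
  then have "enn2real (W2sq (LL d t \<rho>) (LL d t \<nu>)) \<le> d / 2 * enn2real (W2sq \<rho> \<nu>)"
    using enn2real_mono[OF W2sq_LL_le[OF assms(3-5)]] assms(5) by (simp add: enn2real_mult)
  then show ?thesis
    unfolding W2_def by (metis real_sqrt_le_mono real_sqrt_mult)
qed

theorem lemma8p1:
  fixes d t :: real
  assumes "0 < d" and "d < 2" and "0 \<le> t" and "t \<le> 1"
  shows "(\<forall>rho \<in> W2space. LL d t rho \<in> W2space) \<and>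
    (\<exists>c < 1. \<forall>rho \<in> W2space. \<forall>nu \<in> W2space.
        W2 (LL d t rho) (LL d t nu) \<le> c * W2 rho nu)"
proof
  show "\<forall>rho \<in> W2space. LL d t rho \<in> W2space"
    using assms by (simp add: LL_in_W2space)
  have "sqrt (d / 2) < 1"
    using assms by simp
  then show "\<exists>c < 1. \<forall>rho \<in> W2space. \<forall>nu \<in> W2space. W2 (LL d t rho) (LL d t nu) \<le> c * W2 rho nu"
    using assms W2_LL_le by blast
qed

end
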